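(* Let $S$ be an intra-regular $\Gamma$-AG$^{**}$-groupoid and $A\subseteq S$. Then $A$ is a left $\Gamma$-ideal of $S$ if and only if $A$ is a right $\Gamma$-ideal of $S$.
   Context: Let $S$ and $\Gamma$ be nonempty sets with a map $S\times\Gamma\times S\to S$, $(x,\gamma,y)\mapsto x\gamma y$. $S$ is a $\Gamma$-AG-groupoid if $(x\gamma y)\delta z=(z\gamma y)\delta x$ for all $x,y,z\in S$, $\gamma,\delta\in\Gamma$; it is a $\Gamma$-AG$^{**}$-groupoid if moreover $a\alpha(b\beta c)=b\alpha(a\beta c)$ for all $a,b,c\in S$, $\alpha,\beta\in\Gamma$. For subsets $A,B\subseteq S$, $A\Gamma B=\{a\gamma b: a\in A,\gamma\in\Gamma,b\in B\}$. $S$ is intra-regular if for every $a\in S$ there exist $x,y\in S$ and $\beta,\gamma,\delta\in\Gamma$ with $a=(x\beta(a\delta a))\gamma y$. A nonempty subset $A$ is a left (right) $\Gamma$-ideal if $S\Gamma A\subseteq A$ ($A\Gamma S\subseteq A$). *)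

theory Defs
  imports Main
begin

text \<open>A Gamma-groupoid: carrier S, parameter set G (Gamma), ternary operation m,
  written m x g y for x g y, closed on S.\<close>

definition gamma_closed :: "'a set \<Rightarrow> 'g set \<Rightarrow> ('a \<Rightarrow> 'g \<Rightarrow> 'a \<Rightarrow> 'a) \<Rightarrow> bool" where
  "gamma_closed S G m \<longleftrightarrow> S \<noteq> {} \<and> G \<noteq> {} \<and>
     (\<forall>x\<in>S. \<forall>g\<in>G. \<forall>y\<in>S. m x g y \<in> S)"

definition gamma_AG_groupoid :: "'a set \<Rightarrow> 'g set \<Rightarrow> ('a \<Rightarrow> 'g \<Rightarrow> 'a \<Rightarrow> 'a) \<Rightarrow> bool" where
  "gamma_AG_groupoid S G m \<longleftrightarrow> gamma_closed S G m \<and>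
     (\<forall>x\<in>S. \<forall>y\<in>S. \<forall>z\<in>S. \<forall>g\<in>G. \<forall>d\<in>G. m (m x g y) d z = m (m z g y) d x)"

definition gamma_AG2_groupoid :: "'a set \<Rightarrow> 'g set \<Rightarrow> ('a \<Rightarrow> 'g \<Rightarrow> 'a \<Rightarrow> 'a) \<Rightarrow> bool" where
  "gamma_AG2_groupoid S G m \<longleftrightarrow> gamma_AG_groupoid S G m \<and>
     (\<forall>a\<in>S. \<forall>b\<in>S. \<forall>c\<in>S. \<forall>al\<in>G. \<forall>be\<in>G. m a al (m b be c) = m b al (m a be c))"

definition gamma_prod :: "('a \<Rightarrow> 'g \<Rightarrow> 'a \<Rightarrow> 'a) \<Rightarrow> 'a set \<Rightarrow> 'g set \<Rightarrow> 'a set \<Rightarrow> 'a set" where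
  "gamma_prod m A G B = {m a g b | a g b. a \<in> A \<and> g \<in> G \<and> b \<in> B}"

definition intra_regular :: "'a set \<Rightarrow> 'g set \<Rightarrow> ('a \<Rightarrow> 'g \<Rightarrow> 'a \<Rightarrow> 'a) \<Rightarrow> bool" where
  "intra_regular S G m \<longleftrightarrow> (\<forall>a\<in>S. \<exists>x\<in>S. \<exists>y\<in>S. \<exists>be\<in>G. \<exists>ga\<in>G. \<exists>de\<in>G.
      a = m (m x be (m a de a)) ga y)"

definition left_gamma_ideal :: "'a set \<Rightarrow> 'g set \<Rightarrow> ('a \<Rightarrow> 'g \<Rightarrow> 'a \<Rightarrow> 'a) \<Rightarrow> 'a set \<Rightarrow> bool" where
  "left_gamma_ideal S G m A \<longleftrightarrow> A \<noteq> {} \<and> A \<subseteq> S \<and> gamma_prod m S G A \<subseteq> A"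

definition right_gamma_ideal :: "'a set \<Rightarrow> 'g set \<Rightarrow> ('a \<Rightarrow> 'g \<Rightarrow> 'a \<Rightarrow> 'a) \<Rightarrow> 'a set \<Rightarrow> bool" where
  "right_gamma_ideal S G m A \<longleftrightarrow> A \<noteq> {} \<and> A \<subseteq> S \<and> gamma_prod m A G S \<subseteq> A"

end

theory Submission
  imports Defs
begin

(* Intra-regularity writes every a \<in> S as a = u \<gamma> y with
   u = x \<beta> (a \<delta> a).  For the two directions:
   - If A is a left ideal, then a \<delta> a and hence u lie in A, and the left
     invertive law turns a g s = (u \<gamma> y) g s into (s \<gamma> y) g u \<in> S \<Gamma> A \<subseteq> A.
     This direction only needs a \<Gamma>-AG-groupoid.
   - If A is a right ideal, the AG** law gives u = a \<beta> (x \<delta> a) \<in> A \<Gamma> S \<subseteq> A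
     and s g a = s g (u \<gamma> y) = u g (s \<gamma> y) \<in> A \<Gamma> S \<subseteq> A. *)

lemma gamma_AG_closed:
  assumes "gamma_AG_groupoid S G m" "x \<in> S" "g \<in> G" "y \<in> S"
  shows "m x g y \<in> S"
  using assms unfolding gamma_AG_groupoid_def gamma_closed_def by blast

lemma gamma_AG_left_invertive:
  assumes "gamma_AG_groupoid S G m" "x \<in> S" "y \<in> S" "z \<in> S" "g \<in> G" "d \<in> G"
  shows "m (m x g y) d z = m (m z g y) d x"
  using assms unfolding gamma_AG_groupoid_def by blast

lemma gamma_AG2_exchange:
  assumes "gamma_AG2_groupoid S G m" "a \<in> S" "b \<in> S" "c \<in> S" "al \<in> G" "be \<in> G"
  shows "m a al (m b be c) = m b al (m a be c)"
  using assms unfolding gamma_AG2_groupoid_def by blast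

lemma gamma_AG2_imp_AG:
  "gamma_AG2_groupoid S G m \<Longrightarrow> gamma_AG_groupoid S G m"
  unfolding gamma_AG2_groupoid_def by blast

lemma intra_regularE:
  assumes "intra_regular S G m" "a \<in> S"
  obtains x y be ga de where "x \<in> S" "y \<in> S" "be \<in> G" "ga \<in> G" "de \<in> G"
    "a = m (m x be (m a de a)) ga y"
  using assms unfolding intra_regular_def by blast

lemma left_gamma_ideal_iff:
  "left_gamma_ideal S G m A \<longleftrightarrow>
     A \<noteq> {} \<and> A \<subseteq> S \<and> (\<forall>s\<in>S. \<forall>g\<in>G. \<forall>a\<in>A. m s g a \<in> A)"
  unfolding left_gamma_ideal_def gamma_prod_def by blast

lemma right_gamma_ideal_iff:
  "right_gamma_ideal S G m A \<longleftrightarrow>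
     A \<noteq> {} \<and> A \<subseteq> S \<and> (\<forall>a\<in>A. \<forall>g\<in>G. \<forall>s\<in>S. m a g s \<in> A)"
  unfolding right_gamma_ideal_def gamma_prod_def by blast

lemma left_ideal_imp_right_ideal:
  assumes AG: "gamma_AG_groupoid S G m"
    and IR: "intra_regular S G m"
    and L: "left_gamma_ideal S G m A"
  shows "right_gamma_ideal S G m A"
proof -
  have A: "A \<noteq> {}" "A \<subseteq> S"
    and left: "\<And>s g a. s \<in> S \<Longrightarrow> g \<in> G \<Longrightarrow> a \<in> A \<Longrightarrow> m s g a \<in> A"
    using L unfolding left_gamma_ideal_iff by blast+
  have "m a g s \<in> A" if a: "a \<in> A" and g: "g \<in> G" and s: "s \<in> S" for a g s
  proof -
    have aS: "a \<in> S" using a A by blast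
    obtain x y be ga de where h: "x \<in> S" "y \<in> S" "be \<in> G" "ga \<in> G" "de \<in> G"
      and a_eq: "a = m (m x be (m a de a)) ga y"
      using intra_regularE[OF IR aS] .
    define u where "u = m x be (m a de a)"
    have uA: "u \<in> A" unfolding u_def using left h a aS by blast
    hence uS: "u \<in> S" using A by blast
    have "m a g s = m (m u ga y) g s" using a_eq unfolding u_def by simp
    also have "\<dots> = m (m s ga y) g u"
      using gamma_AG_left_invertive[OF AG uS h(2) s h(4) g] .
    finally show ?thesis using left gamma_AG_closed[OF AG s h(4) h(2)] g uA by simp
  qed
  thus ?thesis using A unfolding right_gamma_ideal_iff by blast
qed

lemma right_ideal_imp_left_ideal:
  assumes AG2: "gamma_AG2_groupoid S G m"
    and IR: "intra_regular S G m"
    and R: "right_gamma_ideal S G m A"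
  shows "left_gamma_ideal S G m A"
proof -
  note AG = gamma_AG2_imp_AG[OF AG2]
  have A: "A \<noteq> {}" "A \<subseteq> S"
    and right: "\<And>a g s. a \<in> A \<Longrightarrow> g \<in> G \<Longrightarrow> s \<in> S \<Longrightarrow> m a g s \<in> A"
    using R unfolding right_gamma_ideal_iff by blast+
  have "m s g a \<in> A" if s: "s \<in> S" and g: "g \<in> G" and a: "a \<in> A" for s g a
  proof -
    have aS: "a \<in> S" using a A by blast
    obtain x y be ga de where h: "x \<in> S" "y \<in> S" "be \<in> G" "ga \<in> G" "de \<in> G"
      and a_eq: "a = m (m x be (m a de a)) ga y"
      using intra_regularE[OF IR aS] .
    define u where "u = m x be (m a de a)"
    have "u = m a be (m x de a)"
      unfolding u_def using gamma_AG2_exchange[OF AG2 h(1) aS aS h(3) h(5)] .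
    hence uA: "u \<in> A" using right a h gamma_AG_closed[OF AG h(1) h(5) aS] by simp
    have uS: "u \<in> S" using uA A by blast
    have "m s g a = m s g (m u ga y)" using a_eq unfolding u_def by simp
    also have "\<dots> = m u g (m s ga y)"
      using gamma_AG2_exchange[OF AG2 s uS h(2) g h(4)] .
    finally show ?thesis using right gamma_AG_closed[OF AG s h(4) h(2)] g uA by simp
  qed
  thus ?thesis using A unfolding left_gamma_ideal_iff by blast
qed

theorem mainTheorem4:
  fixes S :: "'a set" and G :: "'g set" and m :: "'a \<Rightarrow> 'g \<Rightarrow> 'a \<Rightarrow> 'a"
    and A :: "'a set"
  assumes "gamma_AG2_groupoid S G m"
    and "intra_regular S G m"
    and "A \<subseteq> S"
  shows "left_gamma_ideal S G m A \<longleftrightarrow> right_gamma_ideal S G m A"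
proof
  show "left_gamma_ideal S G m A \<Longrightarrow> right_gamma_ideal S G m A"
    using left_ideal_imp_right_ideal[OF gamma_AG2_imp_AG[OF assms(1)] assms(2)] .
  show "right_gamma_ideal S G m A \<Longrightarrow> left_gamma_ideal S G m A"
    using right_ideal_imp_left_ideal[OF assms(1,2)] .
qed

end
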